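(* Let $(\Omega,\rho)$ be a metric space, $\beta\in(0,1]$, $\emptyset\ne A\subset\Omega$ and $f:\Omega\to[0,1]$ such that $\sup_{u\ne v\in A}\frac{|f(u)-f(v)|}{\rho(u,v)^\beta}<\infty$ and $\mathrm{diam}(A)<\infty$. Then the $\beta$-PMSE $F_A$ of $f$ from $A$ is well defined, takes values in $[0,1]$, and satisfies $\Lambda^\beta_{F_A}(x)\le\Lambda^\beta_f(x)$ for every $x\in\Omega$.
   Context: $\Lambda_g^\beta(x):=\sup_{y\in\Omega\setminus\{x\}}\frac{|g(x)-g(y)|}{\rho(x,y)^\beta}$. For $x\in\Omega$ and $u,v\in A$ (excluding the case $u=v=x$), set $R_x(u,v):=\frac{f(v)-f(u)}{\rho(x,v)^\beta+\rho(x,u)^\beta}$, $F_x(u,v):=f(u)+R_x(u,v)\rho(x,u)^\beta$, $R^*_x:=\sup_{u,v\in A}R_x(u,v)$, and for $0<\epsilon<R_x^*$, $W_x(\epsilon):=\{(u,v)\in A\times A: R_x(u,v)>R_x^*-\epsilon\}$, $\Phi_x(\epsilon):=\{F_x(u,v):(u,v)\in W_x(\epsilon)\}$. The $\beta$-pointwise minimal slope extension ($\beta$-PMSE) is $F_A(x):=\lim_{\epsilon\to0^+}\Phi_x(\epsilon)$, meaning the unique real number $r$ with $\sup_{\phi\in\Phi_x(\epsilon)}|\phi-r|\to0$ as $\epsilon\to0^+$ ("well defined" means this limit exists). In the degenerate case where $f$ is constant on $A$, $F_A$ is defined to be that constant. *)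

theory Defs
  imports "HOL-Analysis.Analysis"
begin

definition hslope :: "real \<Rightarrow> ('a::metric_space \<Rightarrow> real) \<Rightarrow> 'a \<Rightarrow> ereal" where
  "hslope \<beta> g x = (SUP y \<in> UNIV - {x}. ereal (\<bar>g x - g y\<bar> / dist x y powr \<beta>))"

definition adm_pairs :: "'a set \<Rightarrow> 'a \<Rightarrow> ('a \<times> 'a) set" where
  "adm_pairs A x = {(u, v). u \<in> A \<and> v \<in> A \<and> \<not> (u = x \<and> v = x)}"

definition Rx :: "real \<Rightarrow> ('a::metric_space \<Rightarrow> real) \<Rightarrow> 'a \<Rightarrow> 'a \<Rightarrow> 'a \<Rightarrow> real" where
  "Rx \<beta> f x u v = (f v - f u) / (dist x v powr \<beta> + dist x u powr \<beta>)"

definition Fx :: "real \<Rightarrow> ('a::metric_space \<Rightarrow> real) \<Rightarrow> 'a \<Rightarrow> 'a \<Rightarrow> 'a \<Rightarrow> real" where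
  "Fx \<beta> f x u v = f u + Rx \<beta> f x u v * dist x u powr \<beta>"

definition Rstar :: "real \<Rightarrow> ('a::metric_space \<Rightarrow> real) \<Rightarrow> 'a set \<Rightarrow> 'a \<Rightarrow> real" where
  "Rstar \<beta> f A x = Sup ((\<lambda>(u, v). Rx \<beta> f x u v) ` adm_pairs A x)"

definition Wx :: "real \<Rightarrow> ('a::metric_space \<Rightarrow> real) \<Rightarrow> 'a set \<Rightarrow> 'a \<Rightarrow> real \<Rightarrow> ('a \<times> 'a) set" where
  "Wx \<beta> f A x \<epsilon> = {(u, v) \<in> adm_pairs A x. Rx \<beta> f x u v > Rstar \<beta> f A x - \<epsilon>}"

definition Phix :: "real \<Rightarrow> ('a::metric_space \<Rightarrow> real) \<Rightarrow> 'a set \<Rightarrow> 'a \<Rightarrow> real \<Rightarrow> real set" where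
  "Phix \<beta> f A x \<epsilon> = (\<lambda>(u, v). Fx \<beta> f x u v) ` Wx \<beta> f A x \<epsilon>"

definition pmse_limit :: "real \<Rightarrow> ('a::metric_space \<Rightarrow> real) \<Rightarrow> 'a set \<Rightarrow> 'a \<Rightarrow> real \<Rightarrow> bool" where
  "pmse_limit \<beta> f A x r \<longleftrightarrow>
     ((\<lambda>\<epsilon>. SUP \<phi> \<in> Phix \<beta> f A x \<epsilon>. ereal \<bar>\<phi> - r\<bar>) \<longlongrightarrow> 0) (at_right 0)"

definition const_on :: "('a \<Rightarrow> real) \<Rightarrow> 'a set \<Rightarrow> bool" where
  "const_on f A \<longleftrightarrow> (\<exists>c. \<forall>a\<in>A. f a = c)"

definition pmse_well_defined :: "real \<Rightarrow> ('a::metric_space \<Rightarrow> real) \<Rightarrow> 'a set \<Rightarrow> 'a \<Rightarrow> bool" where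
  "pmse_well_defined \<beta> f A x \<longleftrightarrow> const_on f A \<or> (\<exists>!r. pmse_limit \<beta> f A x r)"

definition pmse :: "real \<Rightarrow> ('a::metric_space \<Rightarrow> real) \<Rightarrow> 'a set \<Rightarrow> 'a \<Rightarrow> real" where
  "pmse \<beta> f A x =
     (if const_on f A then (THE c. \<forall>a\<in>A. f a = c) else (THE r. pmse_limit \<beta> f A x r))"

end

theory Submission
  imports Defs
begin

text \<open>
  Away from the degenerate case, write \<open>R = R\<^sup>*\<^sub>x\<close> and \<open>d w = \<rho>(x,w)\<^sup>\<beta>\<close>. Since \<open>R\<close>
  dominates every quotient \<open>R\<^sub>x(u,v)\<close>, the lower (Whitney-type) envelope
  \<open>sup\<^sub>v (f v - R d v)\<close> lies below the upper (McShane-type) envelope \<open>inf\<^sub>u (f u + R d u)\<close>,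
  while every value \<open>F\<^sub>x(u,v)\<close> with \<open>(u,v) \<in> W\<^sub>x(\<epsilon>)\<close> lies above the upper envelope minus
  \<open>\<epsilon> D\<close> and below the lower envelope plus \<open>\<epsilon> D\<close>, where \<open>D\<close> bounds \<open>d\<close> on the bounded set \<open>A\<close>.
  Hence \<open>\<Phi>\<^sub>x(\<epsilon>)\<close> converges to both envelopes, they coincide, and \<open>F\<^sub>A(x)\<close> is their common
  value. Comparing the envelopes at \<open>x\<close> and \<open>y\<close> through the triangle inequality for
  \<open>\<rho>\<^sup>\<beta>\<close> gives \<open>|F\<^sub>A(x) - F\<^sub>A(y)| \<le> R\<^sup>*\<^sub>x \<rho>(x,y)\<^sup>\<beta>\<close>, and \<open>R\<^sup>*\<^sub>x \<le> \<Lambda>\<^sup>\<beta>\<^sub>f(x)\<close> because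
  \<open>f v - f u \<le> |f x - f v| + |f x - f u|\<close>.
\<close>

lemma powr_add_le_add_powr:
  fixes a b \<beta> :: real
  assumes "0 \<le> a" "0 \<le> b" "0 < \<beta>" "\<beta> \<le> 1"
  shows "(a + b) powr \<beta> \<le> a powr \<beta> + b powr \<beta>"
proof (cases "a + b = 0")
  case True
  then show ?thesis using assms by simp
next
  case False
  then have s: "a + b > 0" using assms by simp
  have ta: "a / (a + b) \<le> (a / (a + b)) powr \<beta>"
    using powr_mono'[of \<beta> 1 "a / (a + b)"] assms s by simp
  have tb: "b / (a + b) \<le> (b / (a + b)) powr \<beta>"
    using powr_mono'[of \<beta> 1 "b / (a + b)"] assms s by simp
  have "(a + b) powr \<beta> = (a + b) powr \<beta> * (a / (a + b) + b / (a + b))"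
    using s by (simp add: add_divide_distrib[symmetric])
  also have "\<dots> \<le> (a + b) powr \<beta> * ((a / (a + b)) powr \<beta> + (b / (a + b)) powr \<beta>)"
    using ta tb by (intro mult_left_mono) auto
  also have "\<dots> = a powr \<beta> + b powr \<beta>"
    using s assms by (simp add: powr_divide distrib_left)
  finally show ?thesis .
qed

lemma dist_powr_triangle:
  fixes x y z :: "'a::metric_space"
  assumes "0 < \<beta>" "\<beta> \<le> 1"
  shows "dist x z powr \<beta> \<le> dist x y powr \<beta> + dist y z powr \<beta>"
proof -
  have "dist x z powr \<beta> \<le> (dist x y + dist y z) powr \<beta>"
    using assms by (intro powr_mono2) (auto intro: dist_triangle)
  also have "\<dots> \<le> dist x y powr \<beta> + dist y z powr \<beta>"
    using assms by (intro powr_add_le_add_powr) auto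
  finally show ?thesis .
qed

lemma holder_const_of_quotient_bound:
  fixes f :: "'a::metric_space \<Rightarrow> real"
  assumes "\<exists>L. \<forall>u\<in>A. \<forall>v\<in>A. u \<noteq> v \<longrightarrow> \<bar>f u - f v\<bar> / dist u v powr \<beta> \<le> L"
  shows "\<exists>L\<ge>0. \<forall>u\<in>A. \<forall>v\<in>A. \<bar>f u - f v\<bar> \<le> L * dist u v powr \<beta>"
proof -
  obtain L where L: "\<forall>u\<in>A. \<forall>v\<in>A. u \<noteq> v \<longrightarrow> \<bar>f u - f v\<bar> / dist u v powr \<beta> \<le> L"
    using assms by blast
  have "\<bar>f u - f v\<bar> \<le> max L 0 * dist u v powr \<beta>" if "u \<in> A" "v \<in> A" for u v
  proof (cases "u = v")
    case False
    then have "\<bar>f u - f v\<bar> / dist u v powr \<beta> \<le> max L 0" using L that by force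
    then show ?thesis using False by (simp add: divide_le_eq mult.commute)
  qed simp
  then show ?thesis by (intro exI[of _ "max L 0"]) auto
qed

lemma hslope_le_ereal_iff:
  "hslope \<beta> g x \<le> ereal C \<longleftrightarrow> (\<forall>y. \<bar>g x - g y\<bar> \<le> C * dist x y powr \<beta>)"
proof -
  have "\<bar>g x - g y\<bar> / dist x y powr \<beta> \<le> C \<longleftrightarrow> \<bar>g x - g y\<bar> \<le> C * dist x y powr \<beta>"
    if "y \<noteq> x" for y
    using that by (simp add: divide_le_eq)
  then show ?thesis unfolding hslope_def by (auto simp: SUP_le_iff)
qed

lemma hslope_const_le: "hslope \<beta> (\<lambda>_. c) x \<le> hslope \<beta> g x"
  unfolding hslope_def by (rule SUP_mono) auto

lemma pmse_const_on:
  assumes "const_on f A" "a \<in> A"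
  shows "pmse \<beta> f A x = f a"
  using assms unfolding pmse_def const_on_def by auto

lemma adm_pairs_denom_pos:
  "(u, v) \<in> adm_pairs A x \<Longrightarrow> 0 < dist x v powr \<beta> + dist x u powr \<beta>"
  unfolding adm_pairs_def by (auto simp: add_pos_nonneg add_nonneg_pos)

lemma Rx_le_iff:
  assumes "(u, v) \<in> adm_pairs A x"
  shows "Rx \<beta> f x u v \<le> C \<longleftrightarrow> f v - f u \<le> C * (dist x v powr \<beta> + dist x u powr \<beta>)"
  using adm_pairs_denom_pos[OF assms] by (simp add: Rx_def pos_divide_le_eq)

lemma Fx_eq_right:
  assumes "(u, v) \<in> adm_pairs A x"
  shows "Fx \<beta> f x u v = f v - Rx \<beta> f x u v * dist x v powr \<beta>"
  using adm_pairs_denom_pos[OF assms, of \<beta>]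
  by (simp add: Fx_def Rx_def field_simps)

lemma Rx_le_holder_const:
  assumes "0 < \<beta>" "\<beta> \<le> 1" "0 \<le> L"
    and holder: "\<forall>u\<in>A. \<forall>v\<in>A. \<bar>f u - f v\<bar> \<le> L * dist u v powr \<beta>"
    and uv: "(u, v) \<in> adm_pairs A x"
  shows "Rx \<beta> f x u v \<le> L"
proof -
  have "f v - f u \<le> L * dist u v powr \<beta>"
    using holder uv unfolding adm_pairs_def by force
  also have "\<dots> \<le> L * (dist x v powr \<beta> + dist x u powr \<beta>)"
    using dist_powr_triangle[OF assms(1,2), where x=u and y=x and z=v] \<open>0 \<le> L\<close>
    by (intro mult_left_mono) (auto simp: dist_commute)
  finally show ?thesis using Rx_le_iff[OF uv] by blast
qed

lemma Rx_le_pointwise_holder: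
  assumes "\<forall>y. \<bar>f x - f y\<bar> \<le> C * dist x y powr \<beta>" "(u, v) \<in> adm_pairs A x"
  shows "Rx \<beta> f x u v \<le> C"
proof -
  have "f v - f u \<le> \<bar>f x - f v\<bar> + \<bar>f x - f u\<bar>" by simp
  also have "\<dots> \<le> C * (dist x v powr \<beta> + dist x u powr \<beta>)"
    using assms(1) by (simp add: distrib_left add_mono)
  finally show ?thesis using Rx_le_iff[OF assms(2)] by blast
qed

lemma tendsto_SUP_abs_diff_zero:
  fixes S :: "real \<Rightarrow> real set"
  assumes "\<And>\<epsilon>. 0 < \<epsilon> \<Longrightarrow> S \<epsilon> \<noteq> {}"
    and "\<And>\<epsilon> \<phi>. 0 < \<epsilon> \<Longrightarrow> \<phi> \<in> S \<epsilon> \<Longrightarrow> \<bar>\<phi> - r\<bar> \<le> \<epsilon> * D"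
  shows "((\<lambda>\<epsilon>. SUP \<phi> \<in> S \<epsilon>. ereal \<bar>\<phi> - r\<bar>) \<longlongrightarrow> 0) (at_right 0)"
proof (rule tendsto_sandwich)
  have "0 \<le> (SUP \<phi> \<in> S \<epsilon>. ereal \<bar>\<phi> - r\<bar>)" if "0 < \<epsilon>" for \<epsilon>
    using assms(1)[OF that] by (auto intro: SUP_upper2)
  then show "\<forall>\<^sub>F \<epsilon> in at_right 0. 0 \<le> (SUP \<phi> \<in> S \<epsilon>. ereal \<bar>\<phi> - r\<bar>)"
    by (auto intro: eventually_at_right_less[THEN eventually_mono])
  have "(SUP \<phi> \<in> S \<epsilon>. ereal \<bar>\<phi> - r\<bar>) \<le> ereal (\<epsilon> * D)" if "0 < \<epsilon>" for \<epsilon>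
    using assms(2)[OF that] by (intro SUP_least) auto
  then show "\<forall>\<^sub>F \<epsilon> in at_right 0. (SUP \<phi> \<in> S \<epsilon>. ereal \<bar>\<phi> - r\<bar>) \<le> ereal (\<epsilon> * D)"
    by (auto intro: eventually_at_right_less[THEN eventually_mono])
  have "((\<lambda>\<epsilon>::real. \<epsilon> * D) \<longlongrightarrow> 0 * D) (at_right 0)"
    by (intro tendsto_intros)
  then show "((\<lambda>\<epsilon>. ereal (\<epsilon> * D)) \<longlongrightarrow> 0) (at_right 0)"
    by (simp add: zero_ereal_def)
qed simp

lemma tendsto_SUP_abs_diff_zero_unique:
  fixes S :: "real \<Rightarrow> real set"
  assumes nonempty: "\<And>\<epsilon>. 0 < \<epsilon> \<Longrightarrow> S \<epsilon> \<noteq> {}"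
    and r: "((\<lambda>\<epsilon>. SUP \<phi> \<in> S \<epsilon>. ereal \<bar>\<phi> - r\<bar>) \<longlongrightarrow> 0) (at_right 0)"
    and s: "((\<lambda>\<epsilon>. SUP \<phi> \<in> S \<epsilon>. ereal \<bar>\<phi> - s\<bar>) \<longlongrightarrow> 0) (at_right 0)"
  shows "r = s"
proof (rule ccontr)
  assume "r \<noteq> s"
  define \<delta> where "\<delta> = \<bar>r - s\<bar> / 2"
  have \<delta>: "0 < ereal \<delta>" using \<open>r \<noteq> s\<close> by (simp add: \<delta>_def)
  have "\<forall>\<^sub>F \<epsilon> in at_right 0. 0 < \<epsilon>
      \<and> (SUP \<phi> \<in> S \<epsilon>. ereal \<bar>\<phi> - r\<bar>) < ereal \<delta> \<and> (SUP \<phi> \<in> S \<epsilon>. ereal \<bar>\<phi> - s\<bar>) < ereal \<delta>"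
    using eventually_conj[OF eventually_at_right_less
        eventually_conj[OF order_tendstoD(2)[OF r \<delta>] order_tendstoD(2)[OF s \<delta>]]] .
  then obtain \<epsilon> where \<epsilon>: "0 < \<epsilon>"
      "(SUP \<phi> \<in> S \<epsilon>. ereal \<bar>\<phi> - r\<bar>) < ereal \<delta>" "(SUP \<phi> \<in> S \<epsilon>. ereal \<bar>\<phi> - s\<bar>) < ereal \<delta>"
    using eventually_happens'[OF trivial_limit_at_right_real] by blast
  obtain \<phi> where \<phi>: "\<phi> \<in> S \<epsilon>" using nonempty[OF \<epsilon>(1)] by blast
  have "ereal \<bar>\<phi> - r\<bar> < ereal \<delta>" "ereal \<bar>\<phi> - s\<bar> < ereal \<delta>"
    using le_less_trans[OF SUP_upper[OF \<phi>] \<epsilon>(2)] le_less_trans[OF SUP_upper[OF \<phi>] \<epsilon>(3)] .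
  then show False unfolding \<delta>_def by (auto simp: abs_if split: if_splits)
qed

locale pmse_setting =
  fixes \<beta> :: real and f :: "'a::metric_space \<Rightarrow> real" and A :: "'a set" and L :: real
  assumes beta_pos: "0 < \<beta>" and beta_le_1: "\<beta> \<le> 1"
    and L_nonneg: "0 \<le> L"
    and holder: "\<forall>u\<in>A. \<forall>v\<in>A. \<bar>f u - f v\<bar> \<le> L * dist u v powr \<beta>"
    and bounded_A: "bounded A"
    and nonconst: "\<not> const_on f A"
begin

abbreviation R :: "'a \<Rightarrow> real" where "R \<equiv> Rstar \<beta> f A"

abbreviation F :: "'a \<Rightarrow> real" where "F \<equiv> pmse \<beta> f A"

definition lower_envelope :: "'a \<Rightarrow> real" where
  "lower_envelope x = Sup ((\<lambda>v. f v - R x * dist x v powr \<beta>) ` A)"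

definition upper_envelope :: "'a \<Rightarrow> real" where
  "upper_envelope x = Inf ((\<lambda>u. f u + R x * dist x u powr \<beta>) ` A)"

lemma exists_other_point: "\<exists>w\<in>A. w \<noteq> x"
  using nonconst unfolding const_on_def by metis

lemma adm_pairs_nonempty: "adm_pairs A x \<noteq> {}"
  using exists_other_point[of x] unfolding adm_pairs_def by auto

lemma bdd_above_Rx: "bdd_above ((\<lambda>(u, v). Rx \<beta> f x u v) ` adm_pairs A x)"
  using Rx_le_holder_const[OF beta_pos beta_le_1 L_nonneg holder]
  by (intro bdd_aboveI[of _ L]) auto

lemma Rx_le_Rstar: "(u, v) \<in> adm_pairs A x \<Longrightarrow> Rx \<beta> f x u v \<le> R x"
  unfolding Rstar_def by (rule cSup_upper[OF _ bdd_above_Rx]) force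

lemma Rstar_nonneg: "0 \<le> R x"
proof -
  obtain w where "w \<in> A" "w \<noteq> x" using exists_other_point by blast
  then have "(w, w) \<in> adm_pairs A x" by (auto simp: adm_pairs_def)
  from Rx_le_Rstar[OF this] show ?thesis by (simp add: Rx_def)
qed

lemma Rstar_le_hslope: "ereal (R x) \<le> hslope \<beta> f x"
proof (rule ereal_le_real)
  fix C assume "hslope \<beta> f x \<le> ereal C"
  then have "\<forall>y. \<bar>f x - f y\<bar> \<le> C * dist x y powr \<beta>" by (simp add: hslope_le_ereal_iff)
  then show "ereal (R x) \<le> ereal C"
    unfolding Rstar_def using adm_pairs_nonempty Rx_le_pointwise_holder
    by (auto intro!: cSup_least)
qed

lemma Phix_nonempty:
  assumes "0 < \<epsilon>"
  shows "Phix \<beta> f A x \<epsilon> \<noteq> {}"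
proof -
  have "R x - \<epsilon> < R x" using assms by simp
  then obtain u v where "(u, v) \<in> adm_pairs A x" "R x - \<epsilon> < Rx \<beta> f x u v"
    unfolding Rstar_def using less_cSup_iff[OF _ bdd_above_Rx] adm_pairs_nonempty by force
  then show ?thesis unfolding Phix_def Wx_def by auto
qed


lemma whitney_term_le_mcshane_term:
  assumes "v \<in> A" "w \<in> A"
  shows "f v - R x * dist x v powr \<beta> \<le> f w + R x * dist x w powr \<beta>"
proof (cases "(w, v) \<in> adm_pairs A x")
  case True
  then have "f v - f w \<le> R x * (dist x v powr \<beta> + dist x w powr \<beta>)"
    using Rx_le_Rstar Rx_le_iff by blast
  then show ?thesis by (simp add: algebra_simps)
next
  case False
  then show ?thesis using assms by (simp add: adm_pairs_def)
qed

lemma A_nonempty: "A \<noteq> {}"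
  using nonconst unfolding const_on_def by auto

lemma bdd_above_whitney_terms: "bdd_above ((\<lambda>v. f v - R x * dist x v powr \<beta>) ` A)"
proof -
  obtain w where "w \<in> A" using A_nonempty by blast
  then show ?thesis
    using whitney_term_le_mcshane_term by (intro bdd_aboveI[of _ "f w + R x * dist x w powr \<beta>"]) auto
qed

lemma bdd_below_mcshane_terms: "bdd_below ((\<lambda>u. f u + R x * dist x u powr \<beta>) ` A)"
proof -
  obtain w where "w \<in> A" using A_nonempty by blast
  then show ?thesis
    using whitney_term_le_mcshane_term by (intro bdd_belowI[of _ "f w - R x * dist x w powr \<beta>"]) auto
qed

lemma whitney_term_le_lower_envelope:
  "v \<in> A \<Longrightarrow> f v - R x * dist x v powr \<beta> \<le> lower_envelope x"
  unfolding lower_envelope_def by (rule cSup_upper[OF _ bdd_above_whitney_terms]) auto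

lemma upper_envelope_le_mcshane_term:
  "u \<in> A \<Longrightarrow> upper_envelope x \<le> f u + R x * dist x u powr \<beta>"
  unfolding upper_envelope_def by (rule cInf_lower[OF _ bdd_below_mcshane_terms]) auto

lemma lower_envelope_le_upper_envelope: "lower_envelope x \<le> upper_envelope x"
  unfolding lower_envelope_def upper_envelope_def using A_nonempty
  by (intro cSup_least cInf_greatest) (auto intro: whitney_term_le_mcshane_term)

lemma Phix_between_envelopes:
  assumes D: "\<forall>w\<in>A. dist x w powr \<beta> \<le> D" and "0 < \<epsilon>" and "\<phi> \<in> Phix \<beta> f A x \<epsilon>"
  shows "upper_envelope x - \<epsilon> * D \<le> \<phi>" "\<phi> \<le> lower_envelope x + \<epsilon> * D"
proof -
  obtain u v where uv: "(u, v) \<in> adm_pairs A x" "R x - \<epsilon> < Rx \<beta> f x u v"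
    and \<phi>: "\<phi> = Fx \<beta> f x u v"
    using assms(3) by (auto simp: Phix_def Wx_def)
  have A: "u \<in> A" "v \<in> A" using uv(1) by (auto simp: adm_pairs_def)
  have "R x * dist x u powr \<beta> - \<epsilon> * dist x u powr \<beta> \<le> Rx \<beta> f x u v * dist x u powr \<beta>"
    "R x * dist x v powr \<beta> - \<epsilon> * dist x v powr \<beta> \<le> Rx \<beta> f x u v * dist x v powr \<beta>"
    using uv(2) by (auto simp flip: left_diff_distrib intro: mult_right_mono)
  moreover have "\<epsilon> * dist x u powr \<beta> \<le> \<epsilon> * D" "\<epsilon> * dist x v powr \<beta> \<le> \<epsilon> * D"
    using D A \<open>0 < \<epsilon>\<close> by (auto intro: mult_left_mono)
  moreover have "\<phi> = f u + Rx \<beta> f x u v * dist x u powr \<beta>" "\<phi> = f v - Rx \<beta> f x u v * dist x v powr \<beta>"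
    using Fx_eq_right[OF uv(1)] by (simp_all add: \<phi> Fx_def)
  moreover note upper_envelope_le_mcshane_term[OF A(1), of x] whitney_term_le_lower_envelope[OF A(2), of x]
  ultimately show "upper_envelope x - \<epsilon> * D \<le> \<phi>" "\<phi> \<le> lower_envelope x + \<epsilon> * D"
    by linarith+
qed

lemma pmse_limit_unique: "pmse_limit \<beta> f A x r \<Longrightarrow> pmse_limit \<beta> f A x s \<Longrightarrow> r = s"
  unfolding pmse_limit_def by (rule tendsto_SUP_abs_diff_zero_unique[OF Phix_nonempty])

lemma pmse_limit_envelopes:
  "pmse_limit \<beta> f A x (lower_envelope x)" "pmse_limit \<beta> f A x (upper_envelope x)"
proof -
  obtain e where "\<forall>w\<in>A. dist x w \<le> e" using bounded_A bounded_any_center by blast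
  then have D: "\<forall>w\<in>A. dist x w powr \<beta> \<le> e powr \<beta>"
    using beta_pos by (auto intro: powr_mono2)
  have "\<bar>\<phi> - lower_envelope x\<bar> \<le> \<epsilon> * e powr \<beta> \<and> \<bar>\<phi> - upper_envelope x\<bar> \<le> \<epsilon> * e powr \<beta>"
    if "0 < \<epsilon>" "\<phi> \<in> Phix \<beta> f A x \<epsilon>" for \<epsilon> \<phi>
    using Phix_between_envelopes[OF D that] lower_envelope_le_upper_envelope[of x]
    by (auto simp: abs_le_iff)
  then show "pmse_limit \<beta> f A x (lower_envelope x)" "pmse_limit \<beta> f A x (upper_envelope x)"
    unfolding pmse_limit_def by (auto intro!: tendsto_SUP_abs_diff_zero Phix_nonempty)
qed

lemma pmse_well_defined: "pmse_well_defined \<beta> f A x"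
  unfolding pmse_well_defined_def using pmse_limit_envelopes(1) pmse_limit_unique by blast

lemma pmse_eq_envelopes: "F x = lower_envelope x" "F x = upper_envelope x"
  using pmse_limit_envelopes pmse_limit_unique nonconst
  unfolding pmse_def by auto

lemma pmse_in_interval:
  assumes "\<forall>w\<in>A. f w \<in> {a..b}"
  shows "F x \<in> {a..b}"
proof -
  have "f w - R x * dist x w powr \<beta> \<le> b" "a \<le> f w + R x * dist x w powr \<beta>" if "w \<in> A" for w
  proof -
    have "0 \<le> R x * dist x w powr \<beta>" using Rstar_nonneg by simp
    then show "f w - R x * dist x w powr \<beta> \<le> b" "a \<le> f w + R x * dist x w powr \<beta>"
      using assms that by auto
  qed
  then have "lower_envelope x \<le> b" "a \<le> upper_envelope x"
    unfolding lower_envelope_def upper_envelope_def using A_nonempty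
    by (auto intro!: cSup_least cInf_greatest)
  then show ?thesis using pmse_eq_envelopes by simp
qed

lemma pmse_diff_le_of_Rstar_le:
  assumes "R x \<le> R y"
  shows "F y \<le> F x + R x * dist x y powr \<beta>" "F x \<le> F y + R x * dist x y powr \<beta>"
proof -
  have tri: "R x * dist x w powr \<beta> \<le> R x * dist x y powr \<beta> + R y * dist y w powr \<beta>" for w
  proof -
    have "R x * dist x w powr \<beta> \<le> R x * (dist x y powr \<beta> + dist y w powr \<beta>)"
      using dist_powr_triangle[OF beta_pos beta_le_1] Rstar_nonneg by (intro mult_left_mono)
    also have "\<dots> \<le> R x * dist x y powr \<beta> + R y * dist y w powr \<beta>"
      using assms by (simp add: distrib_left mult_right_mono)
    finally show ?thesis .
  qed
  have "lower_envelope y \<le> F x + R x * dist x y powr \<beta>"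
    unfolding lower_envelope_def using A_nonempty
  proof (intro cSup_least)
    fix t assume "t \<in> (\<lambda>v. f v - R y * dist y v powr \<beta>) ` A"
    then obtain v where "v \<in> A" "t = f v - R y * dist y v powr \<beta>" by blast
    then show "t \<le> F x + R x * dist x y powr \<beta>"
      using whitney_term_le_lower_envelope[of v x] pmse_eq_envelopes(1)[of x] tri[of v] by simp
  qed auto
  then show "F y \<le> F x + R x * dist x y powr \<beta>" using pmse_eq_envelopes(1) by simp
  have "F x - R x * dist x y powr \<beta> \<le> upper_envelope y"
    unfolding upper_envelope_def using A_nonempty
  proof (intro cInf_greatest)
    fix t assume "t \<in> (\<lambda>u. f u + R y * dist y u powr \<beta>) ` A"
    then obtain u where "u \<in> A" "t = f u + R y * dist y u powr \<beta>" by blast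
    then show "F x - R x * dist x y powr \<beta> \<le> t"
      using upper_envelope_le_mcshane_term[of u x] pmse_eq_envelopes(2)[of x] tri[of u] by simp
  qed auto
  then show "F x \<le> F y + R x * dist x y powr \<beta>" using pmse_eq_envelopes(2) by simp
qed

lemma abs_pmse_diff_le: "\<bar>F x - F y\<bar> \<le> R x * dist x y powr \<beta>"
proof (cases "R x \<le> R y")
  case True
  then show ?thesis using pmse_diff_le_of_Rstar_le by (simp add: abs_le_iff algebra_simps)
next
  case False
  then have "\<bar>F y - F x\<bar> \<le> R y * dist y x powr \<beta>"
    using pmse_diff_le_of_Rstar_le[of y x] by (simp add: abs_le_iff algebra_simps)
  also have "\<dots> \<le> R x * dist x y powr \<beta>"
    using False by (simp add: dist_commute mult_right_mono)
  finally show ?thesis by (simp add: abs_minus_commute)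
qed

lemma hslope_pmse_le: "hslope \<beta> F x \<le> hslope \<beta> f x"
proof -
  have "hslope \<beta> F x \<le> ereal (R x)"
    using abs_pmse_diff_le by (simp add: hslope_le_ereal_iff)
  also have "\<dots> \<le> hslope \<beta> f x" by (rule Rstar_le_hslope)
  finally show ?thesis .
qed
end


theorem theorem8:
  fixes f :: "'a::metric_space \<Rightarrow> real" and A :: "'a set" and \<beta> :: real
  assumes "0 < \<beta>" and "\<beta> \<le> 1" and "A \<noteq> {}"
    and "\<forall>x. f x \<in> {0..1}"
    and "\<exists>L. \<forall>u\<in>A. \<forall>v\<in>A. u \<noteq> v \<longrightarrow> \<bar>f u - f v\<bar> / dist u v powr \<beta> \<le> L"
    and "bounded A"
  shows "(\<forall>x. pmse_well_defined \<beta> f A x)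
       \<and> (\<forall>x. pmse \<beta> f A x \<in> {0..1})
       \<and> (\<forall>x. hslope \<beta> (pmse \<beta> f A) x \<le> hslope \<beta> f x)"
proof (cases "const_on f A")
  case True
  obtain a where "a \<in> A" using \<open>A \<noteq> {}\<close> by blast
  then have "pmse \<beta> f A = (\<lambda>_. f a)" using pmse_const_on[OF True] by blast
  then show ?thesis
    using True assms(4) by (simp add: pmse_well_defined_def hslope_const_le)
next
  case False
  obtain L where "0 \<le> L" "\<forall>u\<in>A. \<forall>v\<in>A. \<bar>f u - f v\<bar> \<le> L * dist u v powr \<beta>"
    using holder_const_of_quotient_bound[OF assms(5)] by blast
  then interpret pmse_setting \<beta> f A L
    using assms False by unfold_locales
  show ?thesis
    using pmse_well_defined pmse_in_interval assms(4) hslope_pmse_le by blast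
qed

end
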